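(* Let $(W,S)$ be a Coxeter system, $w\in W\setminus\{1\}$, and $k\in I$ with $k\notin D_R(w)$. Let $W_{I\setminus\{k\}}=\langle s_i : i\in I\setminus\{k\}\rangle$. Then $$\mathrm{Annex}(ws_k)\subseteq \mathrm{Annex}(w)\cdot W_{I\setminus\{k\}}=\{xy: x\in\mathrm{Annex}(w),\ y\in W_{I\setminus\{k\}}\}.$$
   Context: $(W,S)$ a Coxeter system with $S=\{s_i:i\in I\}$; $\ell$ the length; $\le$ the Bruhat order. The right descent set is $D_R(w)=\{i\in I:\ell(ws_i)<\ell(w)\}$. $\mathrm{Annex}(w)=\{y\in W: w\not\le y\}$. *)

theory Defs
  imports "HOL-Algebra.Algebra"
begin

text \<open>A Coxeter system is given by a group G together with a family s indexed by I
  (S = s ` I), presented by a Coxeter matrix m (m i j = 0 encodes infinity).\<close>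

definition coxeter_matrix :: "'i set \<Rightarrow> ('i \<Rightarrow> 'i \<Rightarrow> nat) \<Rightarrow> bool" where
  "coxeter_matrix I m \<longleftrightarrow>
     (\<forall>i\<in>I. m i i = 1) \<and>
     (\<forall>i\<in>I. \<forall>j\<in>I. i \<noteq> j \<longrightarrow> m i j = m j i \<and> (m i j = 0 \<or> m i j \<ge> 2))"

definition word_prod :: "('a, 'b) monoid_scheme \<Rightarrow> ('i \<Rightarrow> 'a) \<Rightarrow> 'i list \<Rightarrow> 'a" where
  "word_prod G s ws = foldr (\<lambda>i x. s i \<otimes>\<^bsub>G\<^esub> x) ws \<one>\<^bsub>G\<^esub>"

definition cox_relators :: "'i set \<Rightarrow> ('i \<Rightarrow> 'i \<Rightarrow> nat) \<Rightarrow> 'i list set" where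
  "cox_relators I m = {[i, i] | i. i \<in> I} \<union>
     {concat (replicate (m i j) [i, j]) | i j. i \<in> I \<and> j \<in> I \<and> i \<noteq> j \<and> m i j \<noteq> 0}"

definition cox_del :: "'i set \<Rightarrow> ('i \<Rightarrow> 'i \<Rightarrow> nat) \<Rightarrow> 'i list \<Rightarrow> 'i list \<Rightarrow> bool" where
  "cox_del I m xs ys \<longleftrightarrow> (\<exists>u r v. r \<in> cox_relators I m \<and> xs = u @ r @ v \<and> ys = u @ v)"

definition cox_equiv :: "'i set \<Rightarrow> ('i \<Rightarrow> 'i \<Rightarrow> nat) \<Rightarrow> 'i list \<Rightarrow> 'i list \<Rightarrow> bool" where
  "cox_equiv I m = (symclp (cox_del I m))\<^sup>*\<^sup>*"

text \<open>(G, s ` I) is a Coxeter system: G is generated by the s i and has the Coxeter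
  presentation with respect to some Coxeter matrix, i.e. a word in the generators
  is trivial in G iff it is trivial modulo the Coxeter relations.\<close>
definition coxeter_system :: "('a, 'b) monoid_scheme \<Rightarrow> 'i set \<Rightarrow> ('i \<Rightarrow> 'a) \<Rightarrow> bool" where
  "coxeter_system G I s \<longleftrightarrow>
     group G \<and> s ` I \<subseteq> carrier G \<and> generate G (s ` I) = carrier G \<and>
     (\<exists>m. coxeter_matrix I m \<and>
        (\<forall>ws \<in> lists I. word_prod G s ws = \<one>\<^bsub>G\<^esub> \<longleftrightarrow> cox_equiv I m ws []))"

definition cox_length :: "('a, 'b) monoid_scheme \<Rightarrow> 'i set \<Rightarrow> ('i \<Rightarrow> 'a) \<Rightarrow> 'a \<Rightarrow> nat" where
  "cox_length G I s w = (LEAST n. \<exists>ws \<in> lists I. length ws = n \<and> word_prod G s ws = w)"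

definition right_descent :: "('a, 'b) monoid_scheme \<Rightarrow> 'i set \<Rightarrow> ('i \<Rightarrow> 'a) \<Rightarrow> 'a \<Rightarrow> 'i set" where
  "right_descent G I s w =
     {i \<in> I. cox_length G I s (w \<otimes>\<^bsub>G\<^esub> s i) < cox_length G I s w}"

definition reflections :: "('a, 'b) monoid_scheme \<Rightarrow> 'i set \<Rightarrow> ('i \<Rightarrow> 'a) \<Rightarrow> 'a set" where
  "reflections G I s = {u \<otimes>\<^bsub>G\<^esub> s i \<otimes>\<^bsub>G\<^esub> inv\<^bsub>G\<^esub> u | u i. u \<in> carrier G \<and> i \<in> I}"

definition bruhat_step :: "('a, 'b) monoid_scheme \<Rightarrow> 'i set \<Rightarrow> ('i \<Rightarrow> 'a) \<Rightarrow> 'a \<Rightarrow> 'a \<Rightarrow> bool" where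
  "bruhat_step G I s x y \<longleftrightarrow>
     x \<in> carrier G \<and> (\<exists>t \<in> reflections G I s. y = x \<otimes>\<^bsub>G\<^esub> t) \<and>
     cox_length G I s x < cox_length G I s y"

definition bruhat_le :: "('a, 'b) monoid_scheme \<Rightarrow> 'i set \<Rightarrow> ('i \<Rightarrow> 'a) \<Rightarrow> 'a \<Rightarrow> 'a \<Rightarrow> bool" where
  "bruhat_le G I s u w \<longleftrightarrow> u \<in> carrier G \<and> w \<in> carrier G \<and> (bruhat_step G I s)\<^sup>*\<^sup>* u w"

definition annex :: "('a, 'b) monoid_scheme \<Rightarrow> 'i set \<Rightarrow> ('i \<Rightarrow> 'a) \<Rightarrow> 'a \<Rightarrow> 'a set" where
  "annex G I s w = {y \<in> carrier G. \<not> bruhat_le G I s w y}"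

end

theory Submission
  imports Defs
begin

text \<open>
  Induct on the length of \<open>y \<in> Annex(w s\<^sub>k)\<close>. If \<open>y\<close> has a right descent \<open>j \<noteq> k\<close>, then
  \<open>y s\<^sub>j < y\<close> lies in \<open>Annex(w s\<^sub>k)\<close> as well, and \<open>y = (y s\<^sub>j) s\<^sub>j\<close> is covered by induction.
  Otherwise \<open>D\<^sub>R(y) \<subseteq> {k}\<close>. If \<open>w \<le> y\<close>, the lifting property excludes \<open>k \<in> D\<^sub>R(y)\<close>
  (it would give \<open>w s\<^sub>k \<le> y\<close>), so \<open>y = 1\<close> and \<open>w = 1\<close>; hence \<open>w \<not>\<le> y\<close> and \<open>y \<in> Annex(w)\<close>.

  The Coxeter theory behind this (parity of length, strong exchange, lifting) follows
  from the presentation by Tits' argument: the parity of the number of occurrences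
  of an element in the reflection sequence of a word is unchanged by inserting or
  deleting relators, hence depends only on the group element the word represents.
\<close>

lemma sum_lessThan_add:
  fixes f :: "nat \<Rightarrow> 'a::comm_monoid_add"
  shows "(\<Sum>k<a + b. f k) = (\<Sum>k<a. f k) + (\<Sum>k<b. f (a + k))"
  by (induction b) (auto simp: add.assoc)

lemma invariant_along_symclp:
  assumes "(symclp R)\<^sup>*\<^sup>* a b" and "\<And>x y. R x y \<Longrightarrow> f x = f y"
  shows "f a = f b"
  using assms(1) by induction (auto simp: symclp_def dest: assms(2))

lemma (in group) set_mult_subgroup_right_cancel:
  assumes H: "subgroup H G" and A: "A \<subseteq> carrier G" and y: "y \<in> carrier G"
    and h: "h \<in> H" and yh: "y \<otimes> h \<in> A <#> H"
  shows "y \<in> A <#> H"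
proof -
  obtain a h' where a: "a \<in> A" and h': "h' \<in> H" and eq: "y \<otimes> h = a \<otimes> h'"
    using yh unfolding set_mult_def by blast
  have hc: "h \<in> carrier G" and h'c: "h' \<in> carrier G"
    using h h' subgroup.mem_carrier[OF H] by auto
  have "y = a \<otimes> (h' \<otimes> inv h)"
    using eq A a y hc h'c by (metis inv_solve_right m_assoc m_closed inv_closed subsetD)
  moreover have "h' \<otimes> inv h \<in> H" using H h h' by (simp add: subgroup.m_closed subgroup.m_inv_closed)
  ultimately show ?thesis using a unfolding set_mult_def by blast
qed

lemma (in group) subset_set_mult_subgroup:
  assumes "subgroup H G" and "A \<subseteq> carrier G"
  shows "A \<subseteq> A <#> H"
proof
  fix a assume "a \<in> A"
  then have "a = a \<otimes> \<one>" and "\<one> \<in> H" using assms subgroup.one_closed by auto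
  with \<open>a \<in> A\<close> show "a \<in> A <#> H" unfolding set_mult_def by blast
qed

lemma (in group) inv_mult_cancel_left [simp]:
  "x \<in> carrier G \<Longrightarrow> y \<in> carrier G \<Longrightarrow> inv x \<otimes> (x \<otimes> y) = y"
  by (simp flip: m_assoc)

text \<open>\<open>reflection_parity G s a t\<close>: \<open>t\<close> occurs an odd number of times in the sequence
  \<open>s\<^sub>a\<^sub>1 \<cdots> s\<^sub>a\<^sub>p\<^sub>-\<^sub>1 s\<^sub>a\<^sub>p s\<^sub>a\<^sub>p\<^sub>-\<^sub>1 \<cdots> s\<^sub>a\<^sub>1\<close>, \<open>p = 1, \<dots>, |a|\<close>.\<close>
fun reflection_parity :: "('a, 'b) monoid_scheme \<Rightarrow> ('i \<Rightarrow> 'a) \<Rightarrow> 'i list \<Rightarrow> 'a \<Rightarrow> bool" where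
  "reflection_parity G s [] t = False"
| "reflection_parity G s (i # a) t =
     ((t = s i) \<noteq> reflection_parity G s a (s i \<otimes>\<^bsub>G\<^esub> t \<otimes>\<^bsub>G\<^esub> s i))"

fun alt_word :: "'i \<Rightarrow> 'i \<Rightarrow> nat \<Rightarrow> 'i list" where
  "alt_word i j 0 = []"
| "alt_word i j (Suc n) = i # alt_word j i n"

lemma concat_replicate_eq_alt_word: "concat (replicate n [i, j]) = alt_word i j (2 * n)"
  by (induction n) auto

locale coxeter_group = group G for G :: "('a, 'b) monoid_scheme" (structure) +
  fixes I :: "'i set" and s :: "'i \<Rightarrow> 'a" and m :: "'i \<Rightarrow> 'i \<Rightarrow> nat"
  assumes gens_in_carrier: "s ` I \<subseteq> carrier G"
    and generate_gens: "generate G (s ` I) = carrier G"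
    and presentation: "\<And>ws. ws \<in> lists I \<Longrightarrow> word_prod G s ws = \<one> \<longleftrightarrow> cox_equiv I m ws []"

lemma coxeter_system_imp_coxeter_group:
  assumes "coxeter_system G I s"
  obtains m where "coxeter_group G I s m"
  using assms unfolding coxeter_system_def coxeter_group_def coxeter_group_axioms_def by blast

context coxeter_group
begin

abbreviation wp where "wp \<equiv> word_prod G s"
abbreviation len where "len \<equiv> cox_length G I s"
abbreviation refls where "refls \<equiv> reflections G I s"
abbreviation bstep where "bstep \<equiv> bruhat_step G I s"
abbreviation ble where "ble \<equiv> bruhat_le G I s"
abbreviation rpar where "rpar \<equiv> reflection_parity G s"

section \<open>Words in the generators\<close>

lemma gen_in_carrier [simp]: "i \<in> I \<Longrightarrow> s i \<in> carrier G"
  using gens_in_carrier by auto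

lemma wp_Nil [simp]: "wp [] = \<one>"
  by (simp add: word_prod_def)

lemma wp_Cons [simp]: "wp (i # a) = s i \<otimes> wp a"
  by (simp add: word_prod_def)

lemma wp_in_carrier [simp]: "a \<in> lists I \<Longrightarrow> wp a \<in> carrier G"
  by (induction a) auto

lemma wp_append: "a \<in> lists I \<Longrightarrow> b \<in> lists I \<Longrightarrow> wp (a @ b) = wp a \<otimes> wp b"
  by (induction a) (auto simp: m_assoc)

lemma relator_in_lists: "r \<in> cox_relators I m \<Longrightarrow> r \<in> lists I"
  unfolding cox_relators_def by auto

lemma even_length_relator: "r \<in> cox_relators I m \<Longrightarrow> even (length r)"
  unfolding cox_relators_def by (auto simp: length_concat sum_list_replicate)

lemma wp_relator: "r \<in> cox_relators I m \<Longrightarrow> wp r = \<one>"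
proof -
  assume r: "r \<in> cox_relators I m"
  have "cox_del I m r []" unfolding cox_del_def using r by force
  then have "cox_equiv I m r []" unfolding cox_equiv_def by auto
  then show ?thesis using presentation relator_in_lists[OF r] by auto
qed

lemma gen_square [simp]: "i \<in> I \<Longrightarrow> s i \<otimes> s i = \<one>"
proof -
  assume i: "i \<in> I"
  have "[i, i] \<in> cox_relators I m" unfolding cox_relators_def using i by auto
  from wp_relator[OF this] i show ?thesis by simp
qed

lemma gen_square_left [simp]: "i \<in> I \<Longrightarrow> x \<in> carrier G \<Longrightarrow> s i \<otimes> (s i \<otimes> x) = x"
  by (simp flip: m_assoc)

lemma inv_gen [simp]: "i \<in> I \<Longrightarrow> inv (s i) = s i"
  by (rule inv_equality) auto

lemma wp_rev: "a \<in> lists I \<Longrightarrow> wp (rev a) = inv (wp a)"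
  by (induction a) (auto simp: wp_append inv_mult_group in_lists_conv_set)

lemma ex_word: "g \<in> carrier G \<Longrightarrow> \<exists>a \<in> lists I. wp a = g"
proof -
  assume "g \<in> carrier G"
  then have "g \<in> generate G (s ` I)" using generate_gens by simp
  then show ?thesis
  proof (induction rule: generate.induct)
    case one
    show ?case by (intro bexI[of _ "[]"]) auto
  next
    case (incl h)
    then obtain i where "i \<in> I" "h = s i" by auto
    then show ?case by (intro bexI[of _ "[i]"]) auto
  next
    case (inv h)
    then obtain i where "i \<in> I" "h = s i" by auto
    then show ?case by (intro bexI[of _ "[i]"]) auto
  next
    case (eng h1 h2)
    then obtain a b where "a \<in> lists I" "b \<in> lists I" "wp a = h1" "wp b = h2" by blast
    then show ?case by (intro bexI[of _ "a @ b"]) (auto simp: wp_append)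
  qed
qed

lemma gen_conj_eq_iff:
  assumes "i \<in> I" and "x \<in> carrier G" and "z \<in> carrier G"
  shows "s i \<otimes> x \<otimes> s i = z \<longleftrightarrow> x = s i \<otimes> z \<otimes> s i"
  using assms by (auto simp: m_assoc)

lemma mult_gen_eq_one_iff: "i \<in> I \<Longrightarrow> y \<in> carrier G \<Longrightarrow> y \<otimes> s i = \<one> \<longleftrightarrow> y = s i"
  by (metis inv_gen inv_equality gen_square gen_in_carrier)

section \<open>Tits' reflection cocycle\<close>

lemma reflection_parity_append:
  "a \<in> lists I \<Longrightarrow> y \<in> carrier G \<Longrightarrow>
   rpar (a @ b) y = (rpar a y \<noteq> rpar b (inv (wp a) \<otimes> y \<otimes> wp a))"
proof (induction a arbitrary: y)
  case Nil
  then show ?case by simp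
next
  case (Cons i a)
  then have i: "i \<in> I" and a: "a \<in> lists I" by auto
  have "inv (wp a) \<otimes> (s i \<otimes> y \<otimes> s i) \<otimes> wp a = inv (wp (i # a)) \<otimes> y \<otimes> wp (i # a)"
    using i a Cons.prems by (simp add: inv_mult_group m_assoc)
  then show ?case using Cons i a by auto
qed

definition dihedral_refl :: "'a \<Rightarrow> 'a \<Rightarrow> nat \<Rightarrow> 'a" where
  "dihedral_refl a b k = (a \<otimes> b) [^] k \<otimes> a"

lemma mult_nat_pow_rotate:
  "a \<in> carrier G \<Longrightarrow> b \<in> carrier G \<Longrightarrow> a \<otimes> (b \<otimes> a) [^] (k::nat) = (a \<otimes> b) [^] k \<otimes> a"
proof (induction k)
  case 0
  then show ?case by simp
next
  case (Suc k)
  have "a \<otimes> (b \<otimes> a) [^] Suc k = (a \<otimes> (b \<otimes> a) [^] k) \<otimes> (b \<otimes> a)"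
    using Suc.prems by (simp add: m_assoc)
  also have "\<dots> = (a \<otimes> b) [^] Suc k \<otimes> a" using Suc by (simp add: m_assoc)
  finally show ?case .
qed

lemma dihedral_refl_in_carrier [simp]:
  "a \<in> carrier G \<Longrightarrow> b \<in> carrier G \<Longrightarrow> dihedral_refl a b k \<in> carrier G"
  by (simp add: dihedral_refl_def)

lemma dihedral_refl_Suc:
  assumes a: "a \<in> carrier G" and b: "b \<in> carrier G"
  shows "dihedral_refl a b (Suc k) = a \<otimes> dihedral_refl b a k \<otimes> a"
proof -
  have "a \<otimes> dihedral_refl b a k \<otimes> a = (a \<otimes> (b \<otimes> a) [^] k) \<otimes> (b \<otimes> a)"
    using a b by (simp add: dihedral_refl_def m_assoc)
  also have "\<dots> = dihedral_refl a b (Suc k)"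
    using a b by (simp add: mult_nat_pow_rotate dihedral_refl_def m_assoc)
  finally show ?thesis by simp
qed

lemma reflection_parity_alt_word:
  "i \<in> I \<Longrightarrow> j \<in> I \<Longrightarrow> y \<in> carrier G \<Longrightarrow>
   rpar (alt_word i j n) y = odd (\<Sum>k<n. if y = dihedral_refl (s i) (s j) k then 1 else 0::nat)"
proof (induction n arbitrary: i j y)
  case 0
  then show ?case by simp
next
  case (Suc n)
  have shift: "(y = dihedral_refl (s i) (s j) (Suc k)) = (s i \<otimes> y \<otimes> s i = dihedral_refl (s j) (s i) k)"
    for k using Suc.prems by (simp add: dihedral_refl_Suc gen_conj_eq_iff)
  have "rpar (alt_word i j (Suc n)) y
      = ((y = s i) \<noteq> odd (\<Sum>k<n. if s i \<otimes> y \<otimes> s i = dihedral_refl (s j) (s i) k then 1 else 0::nat))"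
    using Suc by simp
  also have "\<dots> = odd (\<Sum>k<Suc n. if y = dihedral_refl (s i) (s j) k then 1 else 0::nat)"
    using Suc.prems unfolding sum.lessThan_Suc_shift shift by (simp add: dihedral_refl_def)
  finally show ?case .
qed

lemma wp_alt_word: "i \<in> I \<Longrightarrow> j \<in> I \<Longrightarrow> wp (alt_word i j (2 * n)) = (s i \<otimes> s j) [^] n"
proof (induction n)
  case 0
  then show ?case by simp
next
  case (Suc n)
  have "alt_word i j (2 * Suc n) = i # j # alt_word i j (2 * n)" by (simp add: numeral_2_eq_2)
  then show ?case using Suc nat_pow_Suc2[of "s i \<otimes> s j" n] by (simp add: m_assoc)
qed

text \<open>The reflection sequence of the braid relator \<open>(s\<^sub>i s\<^sub>j)\<^sup>m\<close> runs twice through the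
  \<open>m\<close> reflections of the dihedral group \<open>\<langle>s\<^sub>i, s\<^sub>j\<rangle>\<close>.\<close>
lemma reflection_parity_relator:
  assumes r: "r \<in> cox_relators I m" and y: "y \<in> carrier G"
  shows "\<not> rpar r y"
proof (cases "\<exists>i\<in>I. r = [i, i]")
  case True
  then obtain i where i: "i \<in> I" and ri: "r = [i, i]" by auto
  have "(s i \<otimes> y \<otimes> s i = s i) = (y = s i)"
    using i y by (simp add: gen_conj_eq_iff m_assoc mult_gen_eq_one_iff)
  then show ?thesis using ri by simp
next
  case False
  then obtain i j where i: "i \<in> I" and j: "j \<in> I" and ri: "r = alt_word i j (2 * m i j)"
    using r unfolding cox_relators_def concat_replicate_eq_alt_word by auto
  define n where "n = m i j"
  define f where "f k = (if y = dihedral_refl (s i) (s j) k then 1 else 0::nat)" for k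
  have "(s i \<otimes> s j) [^] n = \<one>" using wp_relator[OF r] ri wp_alt_word[OF i j] n_def by simp
  then have periodic: "f (n + k) = f k" for k
    using i j by (simp add: f_def dihedral_refl_def nat_pow_mult flip: nat_pow_mult)
  have "rpar r y = odd (\<Sum>k<n + n. f k)"
    using ri reflection_parity_alt_word[OF i j y] by (simp add: n_def f_def mult_2)
  also have "\<dots> = odd (2 * (\<Sum>k<n. f k))"
    unfolding sum_lessThan_add periodic by simp
  finally show ?thesis by simp
qed

definition word_invariant :: "'i list \<Rightarrow> (bool \<times> 'a set) option" where
  "word_invariant a = (if a \<in> lists I then Some (even (length a), {y \<in> carrier G. rpar a y}) else None)"

lemma word_invariant_cox_del:
  assumes "cox_del I m a b"
  shows "word_invariant a = word_invariant b"
proof -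
  obtain u r v where r: "r \<in> cox_relators I m" and a: "a = u @ r @ v" and b: "b = u @ v"
    using assms unfolding cox_del_def by blast
  have rl: "r \<in> lists I" using relator_in_lists[OF r] .
  have "rpar a y = rpar b y" if u: "u \<in> lists I" and y: "y \<in> carrier G" for y
  proof -
    define y' where "y' = inv (wp u) \<otimes> y \<otimes> wp u"
    have y': "y' \<in> carrier G" using y u by (simp add: y'_def)
    have "rpar (r @ v) y' = rpar v y'"
      using reflection_parity_append[OF rl y'] reflection_parity_relator[OF r y'] wp_relator[OF r] y'
      by simp
    then show ?thesis
      unfolding a b using reflection_parity_append[OF u y] by (simp add: y'_def)
  qed
  then show ?thesis
    using rl even_length_relator[OF r] unfolding word_invariant_def a b by auto
qed

lemma wp_eq_one_invariants:
  assumes "c \<in> lists I" and "wp c = \<one>"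
  shows "even (length c)" and "\<And>y. y \<in> carrier G \<Longrightarrow> \<not> rpar c y"
proof -
  have "(symclp (cox_del I m))\<^sup>*\<^sup>* c []"
    using presentation assms unfolding cox_equiv_def by auto
  then have "word_invariant c = word_invariant []"
    by (rule invariant_along_symclp) (rule word_invariant_cox_del)
  then show "even (length c)" and "\<And>y. y \<in> carrier G \<Longrightarrow> \<not> rpar c y"
    using assms(1) by (auto simp: word_invariant_def)
qed

lemma rev_in_lists: "a \<in> lists I \<Longrightarrow> rev a \<in> lists I"
  by (simp add: in_lists_conv_set)

lemma even_length_wp_eq:
  assumes "a \<in> lists I" and "b \<in> lists I" and "wp a = wp b"
  shows "even (length a) = even (length b)"
  using wp_eq_one_invariants(1)[of "a @ rev b"] assms rev_in_lists[of b]
  by (simp add: wp_append wp_rev)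

lemma reflection_parity_wp_eq:
  assumes a: "a \<in> lists I" and b: "b \<in> lists I" and e: "wp a = wp b" and y: "y \<in> carrier G"
  shows "rpar a y = rpar b y"
proof -
  have "\<not> rpar (a @ rev b) y" and "\<not> rpar (b @ rev b) y"
    using wp_eq_one_invariants(2) a b e y rev_in_lists[OF b] by (simp_all add: wp_append wp_rev)
  then show ?thesis
    using reflection_parity_append[OF a y, of "rev b"] reflection_parity_append[OF b y, of "rev b"] e
    by simp
qed

section \<open>Length\<close>

lemma len_le_length: "a \<in> lists I \<Longrightarrow> len (wp a) \<le> length a"
  unfolding cox_length_def by (rule Least_le) blast

lemma ex_reduced_word: "g \<in> carrier G \<Longrightarrow> \<exists>a\<in>lists I. length a = len g \<and> wp a = g"
proof -
  assume "g \<in> carrier G"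
  then have "\<exists>n. \<exists>a \<in> lists I. length a = n \<and> wp a = g" using ex_word by blast
  then show ?thesis unfolding cox_length_def by (rule LeastI_ex)
qed

lemma even_len_wp:
  assumes "a \<in> lists I"
  shows "even (len (wp a)) = even (length a)"
proof -
  obtain b where "b \<in> lists I" "length b = len (wp a)" "wp b = wp a"
    using ex_reduced_word[of "wp a"] assms by auto
  then show ?thesis using even_length_wp_eq[OF _ assms] by metis
qed

lemma len_mult_gen:
  assumes g: "g \<in> carrier G" and i: "i \<in> I"
  shows "len (g \<otimes> s i) = Suc (len g) \<or> len g = Suc (len (g \<otimes> s i))"
proof -
  obtain a where a: "a \<in> lists I" "length a = len g" "wp a = g"
    using ex_reduced_word[OF g] by auto
  obtain b where b: "b \<in> lists I" "length b = len (g \<otimes> s i)" "wp b = g \<otimes> s i"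
    using ex_reduced_word[of "g \<otimes> s i"] g i by auto
  have wa: "wp (a @ [i]) = g \<otimes> s i" and wb: "wp (b @ [i]) = g"
    using a b i g by (simp_all add: wp_append m_assoc)
  have "len (g \<otimes> s i) \<le> Suc (len g)" using len_le_length[of "a @ [i]"] wa a i by simp
  moreover have "len g \<le> Suc (len (g \<otimes> s i))" using len_le_length[of "b @ [i]"] wb b i by simp
  moreover have "len (g \<otimes> s i) \<noteq> len g"
    using even_len_wp[of "a @ [i]"] wa a i by auto
  ultimately show ?thesis by linarith
qed

lemma len_eq_0_iff: "g \<in> carrier G \<Longrightarrow> len g = 0 \<longleftrightarrow> g = \<one>"
  using ex_reduced_word[of g] len_le_length[of "[]"] by auto

lemma ex_right_descent:
  assumes y: "y \<in> carrier G" and "y \<noteq> \<one>"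
  shows "\<exists>i\<in>I. len (y \<otimes> s i) < len y"
proof -
  obtain a where a: "a \<in> lists I" "length a = len y" "wp a = y" using ex_reduced_word[OF y] by blast
  then have "a \<noteq> []" using assms len_eq_0_iff by auto
  then obtain b i where ab: "a = b @ [i]" by (metis rev_exhaust)
  then have i: "i \<in> I" and b: "b \<in> lists I" using a(1) by auto
  have "wp b = y \<otimes> s i" using a(3)[symmetric] ab b i by (simp add: wp_append m_assoc)
  then have "len (y \<otimes> s i) < len y" using len_le_length[OF b] a(2) ab by simp
  with i show ?thesis by blast
qed

section \<open>The strong exchange condition\<close>

lemma reflection_parity_deletion:
  "a \<in> lists I \<Longrightarrow> y \<in> carrier G \<Longrightarrow> rpar a y \<Longrightarrow>
   \<exists>p<length a. y \<otimes> wp a = wp (take p a @ drop (Suc p) a)"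
proof (induction a arbitrary: y)
  case Nil
  then show ?case by simp
next
  case (Cons i a)
  then have i: "i \<in> I" and a: "a \<in> lists I" by auto
  show ?case
  proof (cases "y = s i")
    case True
    then show ?thesis using i a by (intro exI[of _ 0]) (simp flip: m_assoc)
  next
    case False
    then have "rpar a (s i \<otimes> y \<otimes> s i)" using Cons.prems by simp
    then obtain p where p: "p < length a"
      and e: "s i \<otimes> y \<otimes> s i \<otimes> wp a = wp (take p a @ drop (Suc p) a)"
      using Cons.IH[OF a, of "s i \<otimes> y \<otimes> s i"] i Cons.prems by auto
    have "y \<otimes> wp (i # a) = s i \<otimes> (s i \<otimes> y \<otimes> s i \<otimes> wp a)"
      using i a Cons.prems by (simp add: m_assoc)
    also have "\<dots> = wp (take (Suc p) (i # a) @ drop (Suc (Suc p)) (i # a))" using e by simp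
    finally show ?thesis using p by (intro exI[of _ "Suc p"]) simp
  qed
qed

lemma refl_in_carrier: "t \<in> refls \<Longrightarrow> t \<in> carrier G"
  unfolding reflections_def by auto

lemma gen_in_refls: "i \<in> I \<Longrightarrow> s i \<in> refls"
  unfolding reflections_def by (rule CollectI, rule exI[of _ \<one>], rule exI[of _ i]) simp

lemma conj_in_refls:
  assumes t: "t \<in> refls" and v: "v \<in> carrier G"
  shows "v \<otimes> t \<otimes> inv v \<in> refls"
proof -
  obtain u i where u: "u \<in> carrier G" and i: "i \<in> I" and tu: "t = u \<otimes> s i \<otimes> inv u"
    using t unfolding reflections_def by auto
  have "v \<otimes> t \<otimes> inv v = (v \<otimes> u) \<otimes> s i \<otimes> inv (v \<otimes> u)"
    using u v i tu by (simp add: m_assoc inv_mult_group)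
  then show ?thesis unfolding reflections_def using u v i by blast
qed

lemma refl_square:
  assumes "t \<in> refls"
  shows "t \<otimes> t = \<one>"
proof -
  obtain u i where u: "u \<in> carrier G" and i: "i \<in> I" and tu: "t = u \<otimes> s i \<otimes> inv u"
    using assms unfolding reflections_def by auto
  have "t \<otimes> t = u \<otimes> (s i \<otimes> (inv u \<otimes> u) \<otimes> s i) \<otimes> inv u"
    using u i tu by (simp add: m_assoc)
  also have "\<dots> = \<one>" using u i by simp
  finally show ?thesis .
qed

lemma inv_refl: "t \<in> refls \<Longrightarrow> inv t = t"
  using refl_square refl_in_carrier inv_equality by blast

lemma reflection_parity_refl:
  assumes t: "t \<in> refls" and a: "a \<in> lists I" and e: "wp a = t"
  shows "rpar a t"
proof -
  obtain u i where u: "u \<in> carrier G" and i: "i \<in> I" and tu: "t = u \<otimes> s i \<otimes> inv u"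
    using t unfolding reflections_def by auto
  obtain c where c: "c \<in> lists I" and wc: "wp c = u" using ex_word[OF u] by blast
  have rc: "rev c \<in> lists I" using rev_in_lists[OF c] .
  have tc: "t \<in> carrier G" using refl_in_carrier[OF t] .
  have conj: "inv (wp c) \<otimes> t \<otimes> wp c = s i" using tu u i wc by (simp add: m_assoc)
  have "\<not> rpar (c @ rev c) t"
    using wp_eq_one_invariants(2)[of "c @ rev c"] c rc tc by (simp add: wp_append wp_rev)
  then have "rpar c t = rpar (rev c) (s i)"
    using reflection_parity_append[OF c tc, of "rev c"] conj by simp
  then have "rpar (c @ i # rev c) t"
    using reflection_parity_append[OF c tc, of "i # rev c"] conj i by (simp add: m_assoc)
  moreover have "wp (c @ i # rev c) = t"
    using c rc i wc tu u by (simp add: wp_append wp_rev m_assoc)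
  ultimately show ?thesis using reflection_parity_wp_eq[OF a _ _ tc, of "c @ i # rev c"] c rc i e
    by simp
qed

theorem strong_exchange:
  assumes t: "t \<in> refls" and g: "g \<in> carrier G" and l: "len (t \<otimes> g) < len g"
    and a: "a \<in> lists I" and e: "wp a = g"
  shows "\<exists>p<length a. t \<otimes> g = wp (take p a @ drop (Suc p) a)"
proof -
  have tc: "t \<in> carrier G" using refl_in_carrier[OF t] .
  obtain b where b: "b \<in> lists I" "length b = len (t \<otimes> g)" "wp b = t \<otimes> g"
    using ex_reduced_word[of "t \<otimes> g"] tc g by auto
  obtain c where c: "c \<in> lists I" "wp c = t" using ex_word[OF tc] by blast
  have gtb: "t \<otimes> wp b = g" using b(3) tc g refl_square[OF t] by (simp flip: m_assoc)
  have "wp (c @ b) = wp a" using b c e gtb by (simp add: wp_append)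
  then have "rpar a t = rpar (c @ b) t"
    using reflection_parity_wp_eq[OF a _ _ tc, of "c @ b"] b c by simp
  also have "\<dots> = (rpar c t \<noteq> rpar b (inv t \<otimes> t \<otimes> t))"
    using reflection_parity_append[OF c(1) tc, of b] c(2) by simp
  also have "inv t \<otimes> t \<otimes> t = t" using tc by simp
  finally have "rpar a t \<or> rpar b t" using reflection_parity_refl[OF t c] by blast
  then show ?thesis
  proof
    assume "rpar a t"
    from reflection_parity_deletion[OF a tc this] e show ?thesis by simp
  next
    \<comment> \<open>a deletion in \<open>b\<close> would produce a word for \<open>g\<close> shorter than \<open>len (t \<otimes> g)\<close>\<close>
    assume "rpar b t"
    from reflection_parity_deletion[OF b(1) tc this] obtain p where p: "p < length b"
      and ep: "t \<otimes> wp b = wp (take p b @ drop (Suc p) b)" by blast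
    have "take p b @ drop (Suc p) b \<in> lists I" using b(1)
      by (auto simp: in_lists_conv_set dest: in_set_dropD in_set_takeD)
    then have "len g \<le> length (take p b @ drop (Suc p) b)"
      using len_le_length ep gtb by metis
    also have "\<dots> < length b" using p by simp
    finally show ?thesis using l b(2) by simp
  qed
qed

section \<open>Bruhat order\<close>

lemma bstep_in_carrier: "bstep x y \<Longrightarrow> x \<in> carrier G \<and> y \<in> carrier G"
  unfolding bruhat_step_def using refl_in_carrier by auto

lemma bstep_len_less: "bstep x y \<Longrightarrow> len x < len y"
  unfolding bruhat_step_def by auto

lemma bstep_imp_ble: "bstep x y \<Longrightarrow> ble x y"
  unfolding bruhat_le_def using bstep_in_carrier by auto

lemma ble_refl: "x \<in> carrier G \<Longrightarrow> ble x x"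
  unfolding bruhat_le_def by auto

lemma ble_trans: "ble x y \<Longrightarrow> ble y z \<Longrightarrow> ble x z"
  unfolding bruhat_le_def by auto

lemma bstep_mult_refl:
  "x \<in> carrier G \<Longrightarrow> t \<in> refls \<Longrightarrow> len x < len (x \<otimes> t) \<Longrightarrow> bstep x (x \<otimes> t)"
  unfolding bruhat_step_def by auto

lemma bstep_mult_gen_descent:
  assumes y: "y \<in> carrier G" and i: "i \<in> I" and l: "len (y \<otimes> s i) < len y"
  shows "bstep (y \<otimes> s i) y"
proof -
  have e: "y \<otimes> s i \<otimes> s i = y" using y i by (simp add: m_assoc)
  show ?thesis using bstep_mult_refl[OF _ gen_in_refls[OF i], of "y \<otimes> s i"] y i l e by simp
qed

text \<open>If the step \<open>u \<rightarrow> v\<close> goes up under right multiplication by \<open>s\<^sub>k\<close> at \<open>u\<close> but not at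
  \<open>v\<close>, strong exchange in the reduced word \<open>b s\<^sub>k\<close> of \<open>v\<close> must delete the final letter.\<close>
lemma bstep_mult_gen_eq:
  assumes st: "bstep u v" and k: "k \<in> I"
    and up: "len u < len (u \<otimes> s k)" and not_up: "len (v \<otimes> s k) \<le> len (u \<otimes> s k)"
  shows "u \<otimes> s k = v"
proof -
  obtain t where t: "t \<in> refls" and vt: "v = u \<otimes> t" and u: "u \<in> carrier G"
    and luv: "len u < len v"
    using st unfolding bruhat_step_def by auto
  have tc: "t \<in> carrier G" using refl_in_carrier[OF t] .
  have v: "v \<in> carrier G" using vt u tc by simp
  have "len (u \<otimes> s k) = Suc (len u)" using len_mult_gen[OF u k] up by auto
  then have lvs: "len v = Suc (len (v \<otimes> s k))" using len_mult_gen[OF v k] luv not_up by auto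
  obtain b where b: "b \<in> lists I" "length b = len (v \<otimes> s k)" "wp b = v \<otimes> s k"
    using ex_reduced_word[of "v \<otimes> s k"] v k by auto
  have bk: "b @ [k] \<in> lists I" and wbk: "wp (b @ [k]) = v"
    using b k v by (simp_all add: wp_append m_assoc)
  have t': "v \<otimes> t \<otimes> inv v \<in> refls" using conj_in_refls[OF t v] .
  have tv: "v \<otimes> t \<otimes> inv v \<otimes> v = u"
    using v tc u refl_square[OF t] by (simp add: vt m_assoc)
  obtain p where p: "p < Suc (length b)"
    and ep: "u = wp (take p (b @ [k]) @ drop (Suc p) (b @ [k]))"
    using strong_exchange[OF t' v _ bk wbk] tv luv by auto
  show ?thesis
  proof (cases "p = length b")
    case True
    then have "u = v \<otimes> s k" using ep b by simp
    then show ?thesis using v k by (simp add: m_assoc)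
  next
    case False
    define b' where "b' = take p b @ drop (Suc p) b"
    have b': "b' \<in> lists I" using b(1)
      by (auto simp: b'_def in_lists_conv_set dest: in_set_dropD in_set_takeD)
    have "u = wp b' \<otimes> s k" using ep p False b' k by (simp add: b'_def wp_append m_assoc)
    then have "len (u \<otimes> s k) \<le> length b'" using len_le_length[OF b'] b' k by (simp add: m_assoc)
    also have "\<dots> < length b" using p False by (simp add: b'_def)
    finally show ?thesis using b(2) not_up by simp
  qed
qed

lemma bstep_mult_gen:
  assumes st: "bstep u v" and k: "k \<in> I"
  shows "ble (u \<otimes> s k) v \<or> ble (u \<otimes> s k) (v \<otimes> s k)"
proof -
  obtain t where t: "t \<in> refls" and vt: "v = u \<otimes> t" and u: "u \<in> carrier G"
    using st unfolding bruhat_step_def by auto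
  have "v \<otimes> s k = (u \<otimes> s k) \<otimes> (s k \<otimes> t \<otimes> inv (s k))"
    using u k refl_in_carrier[OF t] by (simp add: vt m_assoc)
  moreover have "s k \<otimes> t \<otimes> inv (s k) \<in> refls" using conj_in_refls[OF t, of "s k"] k by simp
  ultimately have up: "bstep (u \<otimes> s k) (v \<otimes> s k)" if "len (u \<otimes> s k) < len (v \<otimes> s k)"
    using bstep_mult_refl[of "u \<otimes> s k"] u k that by simp
  consider "len (u \<otimes> s k) < len (v \<otimes> s k)" | "len (u \<otimes> s k) < len u"
    | "len u < len (u \<otimes> s k)" "len (v \<otimes> s k) \<le> len (u \<otimes> s k)"
    using len_mult_gen[OF u k] by linarith
  then show ?thesis
  proof cases
    case 1
    then show ?thesis using up bstep_imp_ble by blast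
  next
    case 2
    then have "bstep (u \<otimes> s k) u" using bstep_mult_gen_descent[OF u k] by simp
    then show ?thesis using st bstep_imp_ble ble_trans by blast
  next
    case 3
    then show ?thesis using bstep_mult_gen_eq[OF st k] ble_refl bstep_in_carrier[OF st] by simp
  qed
qed

theorem lifting:
  assumes uv: "ble u v" and k: "k \<in> I" and descent: "len (v \<otimes> s k) < len v"
  shows "ble (u \<otimes> s k) v"
proof -
  have v: "v \<in> carrier G" using uv unfolding bruhat_le_def by simp
  have "bstep\<^sup>*\<^sup>* u v" using uv unfolding bruhat_le_def by simp
  then show ?thesis
  proof (induction rule: converse_rtranclp_induct)
    case base
    show ?case using bstep_imp_ble[OF bstep_mult_gen_descent[OF v k descent]] .
  next
    case (step u w)
    have "ble w v" using step.hyps(2) bstep_in_carrier[OF step.hyps(1)] v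
      unfolding bruhat_le_def by simp
    then show ?case using bstep_mult_gen[OF step.hyps(1) k] step.IH ble_trans by blast
  qed
qed

lemma ble_one_imp_eq:
  assumes "ble w \<one>"
  shows "w = \<one>"
proof -
  have "bstep\<^sup>*\<^sup>* w \<one>" using assms unfolding bruhat_le_def by simp
  then show ?thesis
  proof (cases rule: rtranclp.cases)
    case (rtrancl_into_rtrancl x)
    then show ?thesis using bstep_len_less[of x \<one>] len_eq_0_iff[of \<one>] by simp
  qed simp
qed

lemma annex_mult_gen_subset:
  assumes w: "w \<in> carrier G" "w \<noteq> \<one>" and k: "k \<in> I"
  shows "annex G I s (w \<otimes> s k) \<subseteq> annex G I s w <#> generate G (s ` (I - {k}))"
    (is "_ \<subseteq> ?A <#> ?H")
proof -
  have H: "subgroup ?H G" using gens_in_carrier by (intro generate_is_subgroup) auto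
  have A: "?A \<subseteq> carrier G" unfolding annex_def by auto
  have "y \<in> ?A <#> ?H" if "y \<in> carrier G" "\<not> ble (w \<otimes> s k) y" for y
    using that
  proof (induction "len y" arbitrary: y rule: less_induct)
    case less
    show ?case
    proof (cases "\<exists>j \<in> I - {k}. len (y \<otimes> s j) < len y")
      case True
      then obtain j where j: "j \<in> I - {k}" and descent: "len (y \<otimes> s j) < len y" by blast
      have "ble (y \<otimes> s j) y" using bstep_imp_ble[OF bstep_mult_gen_descent] less.prems j descent
        by simp
      then have "\<not> ble (w \<otimes> s k) (y \<otimes> s j)" using less.prems(2) ble_trans by blast
      then have "y \<otimes> s j \<in> ?A <#> ?H" using less.hyps descent less.prems(1) j by simp
      moreover have "s j \<in> ?H" using j by (intro generate.incl) auto
      ultimately show ?thesis using set_mult_subgroup_right_cancel[OF H A less.prems(1)] by blast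
    next
      case False
      have "\<not> ble w y"
      proof
        assume wy: "ble w y"
        then have "\<not> len (y \<otimes> s k) < len y" using lifting[OF wy k] less.prems(2) by blast
        then have "y = \<one>" using False ex_right_descent[OF less.prems(1)] by blast
        then show False using wy ble_one_imp_eq w(2) by simp
      qed
      then have "y \<in> ?A" unfolding annex_def using less.prems(1) by simp
      then show ?thesis using subset_set_mult_subgroup[OF H A] by blast
    qed
  qed
  then show ?thesis unfolding annex_def by blast
qed

end

theorem proposition3p13:
  fixes G :: "('a, 'b) monoid_scheme" and I :: "'i set" and s :: "'i \<Rightarrow> 'a"
    and w :: 'a and k :: 'i
  assumes "coxeter_system G I s"
    and "w \<in> carrier G" and "w \<noteq> \<one>\<^bsub>G\<^esub>"
    and "k \<in> I" and "k \<notin> right_descent G I s w"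
  shows "annex G I s (w \<otimes>\<^bsub>G\<^esub> s k)
           \<subseteq> annex G I s w <#>\<^bsub>G\<^esub> generate G (s ` (I - {k}))"
proof -
  obtain m where "coxeter_group G I s m"
    using coxeter_system_imp_coxeter_group[OF assms(1)] .
  then show ?thesis using coxeter_group.annex_mult_gen_subset assms(2-4) by fast
qed

end
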